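(* Let $A\overset{i}{\to}U\overset{j}{\to}S$ be an extension of a semilattice of groups $A$ by an inverse semigroup $S$, and suppose $S$ is an $F$-inverse monoid. Then there exists an order-preserving transversal $\rho$ of $j$.
   Context: A semilattice of groups is an inverse semigroup whose idempotents are central. An extension of $A$ by $S$ is an inverse semigroup $U$ with a monomorphism $i:A\to U$ and an idempotent-separating epimorphism $j:U\to S$ with $i(A)=j^{-1}(E(S))$. A transversal of $j$ is a map $\rho:S\to U$ with $j\circ\rho=\mathrm{id}_S$ and $\rho(E(S))\subseteq E(U)$; it is order-preserving if $s\le t$ implies $\rho(s)\le\rho(t)$ (natural partial orders). An $F$-inverse monoid is an inverse semigroup in which every class of the minimum group congruence $\sigma$ ($(s,t)\in\sigma$ iff $es=et$ for some idempotent $e$) has a maximum element. *)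

theory Defs
  imports Main
begin

definition semigroup_on :: "'a set \<Rightarrow> ('a \<Rightarrow> 'a \<Rightarrow> 'a) \<Rightarrow> bool" where
  "semigroup_on S m \<longleftrightarrow>
     (\<forall>x\<in>S. \<forall>y\<in>S. m x y \<in> S) \<and>
     (\<forall>x\<in>S. \<forall>y\<in>S. \<forall>z\<in>S. m (m x y) z = m x (m y z))"

definition inverse_semigroup_on :: "'a set \<Rightarrow> ('a \<Rightarrow> 'a \<Rightarrow> 'a) \<Rightarrow> bool" where
  "inverse_semigroup_on S m \<longleftrightarrow> semigroup_on S m \<and>
     (\<forall>a\<in>S. \<exists>!b. b \<in> S \<and> m (m a b) a = a \<and> m (m b a) b = b)"

definition idems :: "'a set \<Rightarrow> ('a \<Rightarrow> 'a \<Rightarrow> 'a) \<Rightarrow> 'a set" where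
  "idems S m = {e \<in> S. m e e = e}"

definition semilattice_of_groups :: "'a set \<Rightarrow> ('a \<Rightarrow> 'a \<Rightarrow> 'a) \<Rightarrow> bool" where
  "semilattice_of_groups S m \<longleftrightarrow> inverse_semigroup_on S m \<and>
     (\<forall>e\<in>idems S m. \<forall>s\<in>S. m e s = m s e)"

definition sg_hom :: "('a \<Rightarrow> 'b) \<Rightarrow> 'a set \<Rightarrow> ('a \<Rightarrow> 'a \<Rightarrow> 'a) \<Rightarrow> 'b set \<Rightarrow> ('b \<Rightarrow> 'b \<Rightarrow> 'b) \<Rightarrow> bool" where
  "sg_hom f S m T n \<longleftrightarrow> (\<forall>x\<in>S. f x \<in> T) \<and> (\<forall>x\<in>S. \<forall>y\<in>S. f (m x y) = n (f x) (f y))"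

definition sg_mono :: "('a \<Rightarrow> 'b) \<Rightarrow> 'a set \<Rightarrow> ('a \<Rightarrow> 'a \<Rightarrow> 'a) \<Rightarrow> 'b set \<Rightarrow> ('b \<Rightarrow> 'b \<Rightarrow> 'b) \<Rightarrow> bool" where
  "sg_mono f S m T n \<longleftrightarrow> sg_hom f S m T n \<and> inj_on f S"

definition sg_epi :: "('a \<Rightarrow> 'b) \<Rightarrow> 'a set \<Rightarrow> ('a \<Rightarrow> 'a \<Rightarrow> 'a) \<Rightarrow> 'b set \<Rightarrow> ('b \<Rightarrow> 'b \<Rightarrow> 'b) \<Rightarrow> bool" where
  "sg_epi f S m T n \<longleftrightarrow> sg_hom f S m T n \<and> f ` S = T"

definition idempotent_separating :: "('a \<Rightarrow> 'b) \<Rightarrow> 'a set \<Rightarrow> ('a \<Rightarrow> 'a \<Rightarrow> 'a) \<Rightarrow> bool" where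
  "idempotent_separating f S m \<longleftrightarrow>
     (\<forall>e\<in>idems S m. \<forall>e'\<in>idems S m. f e = f e' \<longrightarrow> e = e')"

definition is_extension ::
  "'a set \<Rightarrow> ('a \<Rightarrow> 'a \<Rightarrow> 'a) \<Rightarrow> 'b set \<Rightarrow> ('b \<Rightarrow> 'b \<Rightarrow> 'b) \<Rightarrow> 'c set \<Rightarrow> ('c \<Rightarrow> 'c \<Rightarrow> 'c)
    \<Rightarrow> ('a \<Rightarrow> 'b) \<Rightarrow> ('b \<Rightarrow> 'c) \<Rightarrow> bool" where
  "is_extension A ma U mu S ms i j \<longleftrightarrow>
     inverse_semigroup_on A ma \<and> inverse_semigroup_on U mu \<and> inverse_semigroup_on S ms \<and>
     sg_mono i A ma U mu \<and> sg_epi j U mu S ms \<and> idempotent_separating j U mu \<and>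
     i ` A = {u \<in> U. j u \<in> idems S ms}"

definition nat_le :: "'a set \<Rightarrow> ('a \<Rightarrow> 'a \<Rightarrow> 'a) \<Rightarrow> 'a \<Rightarrow> 'a \<Rightarrow> bool" where
  "nat_le S m s t \<longleftrightarrow> (\<exists>e\<in>idems S m. s = m e t)"

definition sigma_rel :: "'a set \<Rightarrow> ('a \<Rightarrow> 'a \<Rightarrow> 'a) \<Rightarrow> 'a \<Rightarrow> 'a \<Rightarrow> bool" where
  "sigma_rel S m s t \<longleftrightarrow> (\<exists>e\<in>idems S m. m e s = m e t)"

definition F_inverse_monoid :: "'a set \<Rightarrow> ('a \<Rightarrow> 'a \<Rightarrow> 'a) \<Rightarrow> bool" where
  "F_inverse_monoid S m \<longleftrightarrow> inverse_semigroup_on S m \<and>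
     (\<forall>s\<in>S. \<exists>x\<in>S. sigma_rel S m s x \<and>
        (\<forall>t\<in>S. sigma_rel S m s t \<longrightarrow> nat_le S m t x))"

definition transversal :: "('c \<Rightarrow> 'b) \<Rightarrow> ('b \<Rightarrow> 'c) \<Rightarrow> 'b set \<Rightarrow> ('b \<Rightarrow> 'b \<Rightarrow> 'b) \<Rightarrow> 'c set \<Rightarrow> ('c \<Rightarrow> 'c \<Rightarrow> 'c) \<Rightarrow> bool" where
  "transversal \<rho> j U mu S ms \<longleftrightarrow>
     (\<forall>s\<in>S. \<rho> s \<in> U \<and> j (\<rho> s) = s) \<and> (\<forall>e\<in>idems S ms. \<rho> e \<in> idems U mu)"

definition order_preserving_on :: "('c \<Rightarrow> 'b) \<Rightarrow> 'b set \<Rightarrow> ('b \<Rightarrow> 'b \<Rightarrow> 'b) \<Rightarrow> 'c set \<Rightarrow> ('c \<Rightarrow> 'c \<Rightarrow> 'c) \<Rightarrow> bool" where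
  "order_preserving_on \<rho> U mu S ms \<longleftrightarrow>
     (\<forall>s\<in>S. \<forall>t\<in>S. nat_le S ms s t \<longrightarrow> nat_le U mu (\<rho> s) (\<rho> t))"

end

theory Submission
  imports Defs
begin

text \<open>Fix any transversal \<open>\<rho>\<close>;
  idempotent separation makes it multiplicative on idempotents. Put
  \<open>\<rho>'(s) = \<rho>(s s\<^sup>-\<^sup>1) \<rho>(max s)\<close>, where \<open>max s\<close> is the maximum of the \<open>\<sigma>\<close>-class of \<open>s\<close>, so that
  \<open>s = s s\<^sup>-\<^sup>1 max s\<close>. If \<open>s \<le> t\<close> then \<open>s\<close> and \<open>t\<close> share their \<open>\<sigma>\<close>-class and \<open>s s\<^sup>-\<^sup>1 \<le> t t\<^sup>-\<^sup>1\<close>,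
  whence \<open>\<rho>'(s) = \<rho>(s s\<^sup>-\<^sup>1) \<rho>'(t) \<le> \<rho>'(t)\<close>.\<close>

locale inverse_semigroup =
  fixes S :: "'a set" and mult :: "'a \<Rightarrow> 'a \<Rightarrow> 'a" (infixl "\<cdot>" 70)
  assumes inverse_semigroup: "inverse_semigroup_on S (\<cdot>)"
begin

lemma mult_closed [simp, intro]: "x \<in> S \<Longrightarrow> y \<in> S \<Longrightarrow> x \<cdot> y \<in> S"
  using inverse_semigroup unfolding inverse_semigroup_on_def semigroup_on_def by blast

lemma mult_assoc: "x \<in> S \<Longrightarrow> y \<in> S \<Longrightarrow> z \<in> S \<Longrightarrow> x \<cdot> y \<cdot> z = x \<cdot> (y \<cdot> z)"
  using inverse_semigroup unfolding inverse_semigroup_on_def semigroup_on_def by blast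

definition inv_of :: "'a \<Rightarrow> 'a" where
  "inv_of a = (THE b. b \<in> S \<and> a \<cdot> b \<cdot> a = a \<and> b \<cdot> a \<cdot> b = b)"

lemma ex1_inverse: "a \<in> S \<Longrightarrow> \<exists>!b. b \<in> S \<and> a \<cdot> b \<cdot> a = a \<and> b \<cdot> a \<cdot> b = b"
  using inverse_semigroup unfolding inverse_semigroup_on_def by blast

lemma
  assumes "a \<in> S"
  shows inv_of_closed [simp, intro]: "inv_of a \<in> S"
    and mult_inv_of_mult: "a \<cdot> (inv_of a \<cdot> a) = a"
    and inv_of_mult_inv_of: "inv_of a \<cdot> (a \<cdot> inv_of a) = inv_of a"
proof -
  have "inv_of a \<in> S \<and> a \<cdot> inv_of a \<cdot> a = a \<and> inv_of a \<cdot> a \<cdot> inv_of a = inv_of a"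
    unfolding inv_of_def using ex1_inverse[OF assms] by (rule theI')
  then show "inv_of a \<in> S" "a \<cdot> (inv_of a \<cdot> a) = a" "inv_of a \<cdot> (a \<cdot> inv_of a) = inv_of a"
    using assms by (auto simp: mult_assoc)
qed

lemma inv_of_unique:
  assumes "a \<in> S" "b \<in> S" "a \<cdot> (b \<cdot> a) = a" "b \<cdot> (a \<cdot> b) = b"
  shows "inv_of a = b"
proof -
  have "b \<in> S \<and> a \<cdot> b \<cdot> a = a \<and> b \<cdot> a \<cdot> b = b"
    using assms by (simp add: mult_assoc)
  then show ?thesis
    unfolding inv_of_def using ex1_inverse[OF assms(1)] by (rule the1_equality[rotated])
qed

lemma mult_inv_of_mult_left: "x \<in> S \<Longrightarrow> z \<in> S \<Longrightarrow> x \<cdot> (inv_of x \<cdot> (x \<cdot> z)) = x \<cdot> z"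
  by (metis inv_of_closed mult_assoc mult_closed mult_inv_of_mult)

lemma inv_of_mult_inv_of_left:
  "x \<in> S \<Longrightarrow> z \<in> S \<Longrightarrow> inv_of x \<cdot> (x \<cdot> (inv_of x \<cdot> z)) = inv_of x \<cdot> z"
  by (metis inv_of_closed mult_assoc mult_closed inv_of_mult_inv_of)

lemma inv_of_inv_of [simp]: "a \<in> S \<Longrightarrow> inv_of (inv_of a) = a"
  by (simp add: inv_of_unique mult_inv_of_mult inv_of_mult_inv_of)

abbreviation E :: "'a set" where
  "E \<equiv> idems S (\<cdot>)"

lemma idems_iff: "e \<in> E \<longleftrightarrow> e \<in> S \<and> e \<cdot> e = e"
  by (simp add: idems_def)

lemma idems_closed: "e \<in> E \<Longrightarrow> e \<in> S"
  by (simp add: idems_iff)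

lemma inv_of_idem: "e \<in> E \<Longrightarrow> inv_of e = e"
  by (simp add: idems_iff inv_of_unique)

lemma idem_mult_absorb: "e \<in> E \<Longrightarrow> x \<in> S \<Longrightarrow> e \<cdot> (e \<cdot> x) = e \<cdot> x"
  by (metis idems_iff mult_assoc)

lemma mult_inv_of_idem: "x \<in> S \<Longrightarrow> x \<cdot> inv_of x \<in> E"
  by (metis idems_iff inv_of_closed mult_assoc mult_closed mult_inv_of_mult)

lemma inv_of_mult_idem: "x \<in> S \<Longrightarrow> inv_of x \<cdot> x \<in> E"
  by (metis idems_iff inv_of_closed mult_assoc mult_closed inv_of_mult_inv_of)

lemma idems_mult_closed:
  assumes e: "e \<in> E" and f: "f \<in> E"
  shows "e \<cdot> f \<in> E"
proof -
  have eS: "e \<in> S" and fS: "f \<in> S" using e f by (auto simp: idems_iff)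
  define x where "x = inv_of (e \<cdot> f)"
  have xS: "x \<in> S" using eS fS x_def by auto
  have x: "e \<cdot> f \<cdot> (x \<cdot> (e \<cdot> f)) = e \<cdot> f" "x \<cdot> (e \<cdot> f \<cdot> x) = x"
    using eS fS unfolding x_def by (simp_all add: mult_inv_of_mult inv_of_mult_inv_of)
  \<comment> \<open>\<open>f \<cdot> x \<cdot> e\<close> is another inverse of \<open>e \<cdot> f\<close>, hence equal to \<open>x\<close>\<close>
  have "inv_of (e \<cdot> f) = f \<cdot> (x \<cdot> e)"
  proof (rule inv_of_unique)
    show "e \<cdot> f \<cdot> (f \<cdot> (x \<cdot> e) \<cdot> (e \<cdot> f)) = e \<cdot> f"
      using x eS fS xS e f by (simp add: mult_assoc idem_mult_absorb)
    have "f \<cdot> (x \<cdot> e) \<cdot> (e \<cdot> f \<cdot> (f \<cdot> (x \<cdot> e))) = f \<cdot> (x \<cdot> (e \<cdot> f \<cdot> x) \<cdot> e)"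
      using eS fS xS e f by (simp add: mult_assoc idem_mult_absorb)
    then show "f \<cdot> (x \<cdot> e) \<cdot> (e \<cdot> f \<cdot> (f \<cdot> (x \<cdot> e))) = f \<cdot> (x \<cdot> e)"
      using x by simp
  qed (use eS fS xS in auto)
  then have fxe: "f \<cdot> (x \<cdot> e) = x" using x_def by simp
  have "x \<cdot> x = f \<cdot> (x \<cdot> (e \<cdot> f \<cdot> x) \<cdot> e)"
    using eS fS xS e f by (subst (1 2) fxe[symmetric]) (simp add: mult_assoc idem_mult_absorb)
  also have "\<dots> = x" using x fxe by simp
  finally have "x \<in> E" using xS by (simp add: idems_iff)
  moreover have "inv_of x = e \<cdot> f" using x_def eS fS by simp
  ultimately show ?thesis using inv_of_idem by metis
qed

lemma idems_commute:
  assumes e: "e \<in> E" and f: "f \<in> E"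
  shows "e \<cdot> f = f \<cdot> e"
proof -
  have eS: "e \<in> S" and fS: "f \<in> S" using e f by (auto simp: idems_iff)
  have ef: "e \<cdot> f \<in> E" and fe: "f \<cdot> e \<in> E" using idems_mult_closed e f by auto
  have "inv_of (e \<cdot> f) = f \<cdot> e"
  proof (rule inv_of_unique)
    show "e \<cdot> f \<cdot> (f \<cdot> e \<cdot> (e \<cdot> f)) = e \<cdot> f"
      using ef eS fS e f by (simp add: idems_iff mult_assoc idem_mult_absorb)
    show "f \<cdot> e \<cdot> (e \<cdot> f \<cdot> (f \<cdot> e)) = f \<cdot> e"
      using fe eS fS e f by (simp add: idems_iff mult_assoc idem_mult_absorb)
  qed (use eS fS in auto)
  then show ?thesis using inv_of_idem[OF ef] by simp
qed

lemma inv_of_mult: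
  assumes x: "x \<in> S" and y: "y \<in> S"
  shows "inv_of (x \<cdot> y) = inv_of y \<cdot> inv_of x"
proof (rule inv_of_unique)
  have comm: "inv_of x \<cdot> x \<cdot> (y \<cdot> inv_of y) = y \<cdot> inv_of y \<cdot> (inv_of x \<cdot> x)"
    using idems_commute inv_of_mult_idem mult_inv_of_idem x y by blast
  have "x \<cdot> y \<cdot> (inv_of y \<cdot> inv_of x \<cdot> (x \<cdot> y)) = x \<cdot> (y \<cdot> inv_of y \<cdot> (inv_of x \<cdot> x) \<cdot> y)"
    using x y by (simp add: mult_assoc)
  also have "\<dots> = x \<cdot> (inv_of x \<cdot> x \<cdot> (y \<cdot> inv_of y) \<cdot> y)" using comm by simp
  also have "\<dots> = x \<cdot> y" using x y by (simp add: mult_assoc mult_inv_of_mult_left mult_inv_of_mult)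
  finally show "x \<cdot> y \<cdot> (inv_of y \<cdot> inv_of x \<cdot> (x \<cdot> y)) = x \<cdot> y" .
  have "inv_of y \<cdot> inv_of x \<cdot> (x \<cdot> y \<cdot> (inv_of y \<cdot> inv_of x))
      = inv_of y \<cdot> (inv_of x \<cdot> x \<cdot> (y \<cdot> inv_of y) \<cdot> inv_of x)"
    using x y by (simp add: mult_assoc)
  also have "\<dots> = inv_of y \<cdot> (y \<cdot> inv_of y \<cdot> (inv_of x \<cdot> x) \<cdot> inv_of x)" using comm by simp
  also have "\<dots> = inv_of y \<cdot> inv_of x" using x y by (simp add: mult_assoc inv_of_mult_inv_of_left inv_of_mult_inv_of)
  finally show "inv_of y \<cdot> inv_of x \<cdot> (x \<cdot> y \<cdot> (inv_of y \<cdot> inv_of x)) = inv_of y \<cdot> inv_of x" .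
qed (use x y in auto)

lemma idem_mult_range:
  assumes e: "e \<in> E" and t: "t \<in> S"
  shows "e \<cdot> t \<cdot> inv_of (e \<cdot> t) = e \<cdot> (t \<cdot> inv_of t)"
proof -
  have eS: "e \<in> S" using e by (rule idems_closed)
  have "e \<cdot> t \<cdot> inv_of (e \<cdot> t) = e \<cdot> (t \<cdot> inv_of t \<cdot> e)"
    using e eS t by (simp add: inv_of_mult inv_of_idem mult_assoc)
  also have "\<dots> = e \<cdot> (e \<cdot> (t \<cdot> inv_of t))"
    using idems_commute[OF mult_inv_of_idem[OF t] e] by simp
  finally show ?thesis using e t by (simp add: idem_mult_absorb)
qed

lemma nat_le_iff: "t \<in> S \<Longrightarrow> nat_le S (\<cdot>) s t \<longleftrightarrow> s \<in> S \<and> s = s \<cdot> inv_of s \<cdot> t"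
proof
  assume t: "t \<in> S" and "nat_le S (\<cdot>) s t"
  then obtain e where e: "e \<in> E" "s = e \<cdot> t" unfolding nat_le_def by blast
  have eS: "e \<in> S" using e(1) by (rule idems_closed)
  have "s \<cdot> inv_of s \<cdot> t = e \<cdot> (t \<cdot> inv_of t) \<cdot> t"
    using e t by (simp add: idem_mult_range)
  also have "\<dots> = s" using e eS t by (simp add: mult_assoc mult_inv_of_mult)
  finally show "s \<in> S \<and> s = s \<cdot> inv_of s \<cdot> t" using e eS t by simp
next
  assume "s \<in> S \<and> s = s \<cdot> inv_of s \<cdot> t"
  then show "nat_le S (\<cdot>) s t" unfolding nat_le_def using mult_inv_of_idem by blast
qed

lemma nat_le_refl: "s \<in> S \<Longrightarrow> nat_le S (\<cdot>) s s"
  by (simp add: nat_le_iff mult_assoc mult_inv_of_mult)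

lemma nat_le_antisym:
  assumes "nat_le S (\<cdot>) s t" "nat_le S (\<cdot>) t s" "t \<in> S"
  shows "s = t"
proof -
  obtain e f where e: "e \<in> E" "s = e \<cdot> t" and f: "f \<in> E" "t = f \<cdot> s"
    using assms unfolding nat_le_def by blast
  have eS: "e \<in> S" and fS: "f \<in> S" using e f by (auto simp: idems_iff)
  have sS: "s \<in> S" using e eS assms by simp
  have "t = f \<cdot> e \<cdot> t" using e(2) f(2) eS fS assms by (metis mult_assoc)
  also have "\<dots> = e \<cdot> (f \<cdot> s)"
    using idems_commute[OF e(1) f(1)] eS fS sS assms f(2) idem_mult_absorb[OF f(1) sS]
    by (metis mult_assoc)
  finally show ?thesis using e f by metis
qed

lemma sigma_rel_refl: "s \<in> S \<Longrightarrow> sigma_rel S (\<cdot>) s s"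
  unfolding sigma_rel_def using mult_inv_of_idem by blast

lemma sigma_rel_sym: "sigma_rel S (\<cdot>) s t \<Longrightarrow> sigma_rel S (\<cdot>) t s"
  unfolding sigma_rel_def by metis

lemma sigma_rel_trans:
  assumes "sigma_rel S (\<cdot>) s t" "sigma_rel S (\<cdot>) t u" "s \<in> S" "t \<in> S" "u \<in> S"
  shows "sigma_rel S (\<cdot>) s u"
proof -
  obtain e f where e: "e \<in> E" "e \<cdot> s = e \<cdot> t" and f: "f \<in> E" "f \<cdot> t = f \<cdot> u"
    using assms unfolding sigma_rel_def by blast
  have eS: "e \<in> S" and fS: "f \<in> S" using e f by (auto simp: idems_iff)
  have "e \<cdot> f \<cdot> s = f \<cdot> (e \<cdot> t)"
    using e idems_commute[OF e(1) f(1)] eS fS assms by (simp add: mult_assoc)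
  also have "\<dots> = e \<cdot> (f \<cdot> u)"
    using f idems_commute[OF e(1) f(1)] eS fS assms by (metis mult_assoc)
  finally have "e \<cdot> f \<cdot> s = e \<cdot> f \<cdot> u" using eS fS assms by (simp add: mult_assoc)
  then show ?thesis unfolding sigma_rel_def using idems_mult_closed[OF e(1) f(1)] by blast
qed

lemma nat_le_imp_sigma_rel:
  assumes "nat_le S (\<cdot>) s t" "t \<in> S"
  shows "sigma_rel S (\<cdot>) s t"
proof -
  have s: "s \<in> S" "s = s \<cdot> inv_of s \<cdot> t" using assms nat_le_iff by blast+
  have "s \<cdot> inv_of s \<cdot> s = s \<cdot> inv_of s \<cdot> t"
    using s by (simp add: mult_assoc mult_inv_of_mult)
  then show ?thesis unfolding sigma_rel_def using mult_inv_of_idem[OF s(1)] by blast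
qed

lemma idems_sigma_rel:
  assumes e: "e \<in> E" and f: "f \<in> E"
  shows "sigma_rel S (\<cdot>) e f"
proof -
  have eS: "e \<in> S" and fS: "f \<in> S" using e f by (auto simp: idems_iff)
  have "e \<cdot> f \<cdot> e = e \<cdot> (e \<cdot> f)"
    using idems_commute[OF f e] eS fS by (simp add: mult_assoc)
  also have "\<dots> = e \<cdot> f \<cdot> f" using e f eS fS by (simp add: idem_mult_absorb idems_iff mult_assoc)
  finally show ?thesis unfolding sigma_rel_def using idems_mult_closed[OF e f] by blast
qed

definition sigma_max :: "'a \<Rightarrow> 'a" where
  "sigma_max s =
    (SOME x. x \<in> S \<and> sigma_rel S (\<cdot>) s x \<and> (\<forall>t\<in>S. sigma_rel S (\<cdot>) s t \<longrightarrow> nat_le S (\<cdot>) t x))"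

context
  assumes F_inverse: "F_inverse_monoid S (\<cdot>)"
begin

lemma sigma_max:
  assumes "s \<in> S"
  shows sigma_max_closed: "sigma_max s \<in> S"
    and sigma_rel_sigma_max: "sigma_rel S (\<cdot>) s (sigma_max s)"
    and nat_le_sigma_max_if_sigma_rel:
      "\<And>t. t \<in> S \<Longrightarrow> sigma_rel S (\<cdot>) s t \<Longrightarrow> nat_le S (\<cdot>) t (sigma_max s)"
proof -
  have "\<exists>x. x \<in> S \<and> sigma_rel S (\<cdot>) s x \<and> (\<forall>t\<in>S. sigma_rel S (\<cdot>) s t \<longrightarrow> nat_le S (\<cdot>) t x)"
    using F_inverse assms unfolding F_inverse_monoid_def by blast
  then have "sigma_max s \<in> S \<and> sigma_rel S (\<cdot>) s (sigma_max s) \<and>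
      (\<forall>t\<in>S. sigma_rel S (\<cdot>) s t \<longrightarrow> nat_le S (\<cdot>) t (sigma_max s))"
    unfolding sigma_max_def by (rule someI_ex)
  then show "sigma_max s \<in> S" "sigma_rel S (\<cdot>) s (sigma_max s)"
    "\<And>t. t \<in> S \<Longrightarrow> sigma_rel S (\<cdot>) s t \<Longrightarrow> nat_le S (\<cdot>) t (sigma_max s)"
    by auto
qed

lemma nat_le_sigma_max: "s \<in> S \<Longrightarrow> nat_le S (\<cdot>) s (sigma_max s)"
  by (simp add: nat_le_sigma_max_if_sigma_rel sigma_rel_refl)

lemma sigma_max_eq_if_nat_le:
  assumes "nat_le S (\<cdot>) s t" "s \<in> S" "t \<in> S"
  shows "sigma_max s = sigma_max t"
proof (rule nat_le_antisym)
  have st: "sigma_rel S (\<cdot>) s t" using assms by (simp add: nat_le_imp_sigma_rel)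
  show "nat_le S (\<cdot>) (sigma_max s) (sigma_max t)"
    using assms st by (meson nat_le_sigma_max_if_sigma_rel sigma_max_closed sigma_rel_sigma_max
        sigma_rel_sym sigma_rel_trans)
  show "nat_le S (\<cdot>) (sigma_max t) (sigma_max s)"
    using assms st by (meson nat_le_sigma_max_if_sigma_rel sigma_max_closed sigma_rel_sigma_max
        sigma_rel_trans)
  show "sigma_max t \<in> S" using assms by (simp add: sigma_max_closed)
qed

lemma sigma_max_idem:
  assumes e: "e \<in> E"
  shows "sigma_max e \<in> E"
proof -
  define M where "M = sigma_max e"
  have M: "M \<in> S" using e unfolding M_def by (simp add: idems_closed sigma_max_closed)
  define p where "p = M \<cdot> inv_of M"
  have p: "p \<in> E" using M unfolding p_def by (rule mult_inv_of_idem)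
  \<comment> \<open>\<open>p\<close> is an idempotent, hence \<open>\<sigma>\<close>-related to \<open>e\<close> and so below the maximum \<open>M\<close>\<close>
  have "nat_le S (\<cdot>) p M"
    using e p unfolding M_def
    by (simp add: idems_closed idems_sigma_rel nat_le_sigma_max_if_sigma_rel)
  then have "p = p \<cdot> inv_of p \<cdot> M" using M nat_le_iff by blast
  also have "\<dots> = M" using p M by (simp add: inv_of_idem idems_iff p_def mult_assoc mult_inv_of_mult)
  finally show ?thesis using p M_def by simp
qed

end

end


locale idem_separating_epi =
  U: inverse_semigroup U mu + S: inverse_semigroup S ms
  for U :: "'b set" and mu and S :: "'c set" and ms +
  fixes j :: "'b \<Rightarrow> 'c"
  assumes epi: "sg_epi j U mu S ms"
    and idem_separating: "idempotent_separating j U mu"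
begin

lemma hom_closed: "u \<in> U \<Longrightarrow> j u \<in> S"
  using epi unfolding sg_epi_def sg_hom_def by blast

lemma hom_mult: "u \<in> U \<Longrightarrow> v \<in> U \<Longrightarrow> j (mu u v) = ms (j u) (j v)"
  using epi unfolding sg_epi_def sg_hom_def by blast

lemma hom_inv_of:
  assumes u: "u \<in> U"
  shows "j (U.inv_of u) = S.inv_of (j u)"
proof -
  have "S.inv_of (j u) = j (U.inv_of u)"
    using u by (intro S.inv_of_unique)
      (simp_all add: hom_closed hom_mult[symmetric] U.mult_inv_of_mult U.inv_of_mult_inv_of)
  then show ?thesis by simp
qed

lemma idem_preimage_exists:
  assumes e: "e \<in> S.E"
  shows "\<exists>u \<in> U.E. j u = e"
proof -
  obtain v where v: "v \<in> U" "j v = e"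
    using epi e S.idems_closed unfolding sg_epi_def by blast
  have "j (mu v (U.inv_of v)) = e"
    using v e by (simp add: hom_mult hom_inv_of S.inv_of_idem S.idems_iff)
  then show ?thesis using U.mult_inv_of_idem v by blast
qed

lemma transversal_exists: "\<exists>\<rho>. transversal \<rho> j U mu S ms"
proof -
  have "\<forall>s\<in>S. \<exists>u. u \<in> U \<and> j u = s \<and> (s \<in> S.E \<longrightarrow> u \<in> U.E)"
    using epi idem_preimage_exists U.idems_closed unfolding sg_epi_def by (metis imageE)
  then obtain \<rho> where "\<forall>s\<in>S. \<rho> s \<in> U \<and> j (\<rho> s) = s \<and> (s \<in> S.E \<longrightarrow> \<rho> s \<in> U.E)"
    by metis
  then show ?thesis unfolding transversal_def using S.idems_closed by blast
qed

lemma transversal_idems_mult: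
  assumes \<rho>: "transversal \<rho> j U mu S ms" and e: "e \<in> S.E" and f: "f \<in> S.E"
  shows "mu (\<rho> e) (\<rho> f) = \<rho> (ms e f)"
proof -
  have \<rho>E: "\<And>x. x \<in> S.E \<Longrightarrow> \<rho> x \<in> U.E \<and> j (\<rho> x) = x"
    using \<rho> S.idems_closed unfolding transversal_def by blast
  have "mu (\<rho> e) (\<rho> f) \<in> U.E" using \<rho>E e f U.idems_mult_closed by blast
  moreover have "j (mu (\<rho> e) (\<rho> f)) = j (\<rho> (ms e f))"
    using \<rho>E e f S.idems_mult_closed by (simp add: hom_mult U.idems_closed)
  ultimately show ?thesis
    using idem_separating \<rho>E S.idems_mult_closed[OF e f] unfolding idempotent_separating_def by blast
qed

definition max_lift :: "('c \<Rightarrow> 'b) \<Rightarrow> 'c \<Rightarrow> 'b" where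
  "max_lift \<rho> s = mu (\<rho> (ms s (S.inv_of s))) (\<rho> (S.sigma_max s))"

context
  fixes \<rho> :: "'c \<Rightarrow> 'b"
  assumes F_inverse: "F_inverse_monoid S ms"
    and \<rho>: "transversal \<rho> j U mu S ms"
begin

lemma transversal_closed: "s \<in> S \<Longrightarrow> \<rho> s \<in> U" and transversal_hom: "s \<in> S \<Longrightarrow> j (\<rho> s) = s"
  and transversal_idem: "e \<in> S.E \<Longrightarrow> \<rho> e \<in> U.E"
  using \<rho> unfolding transversal_def by blast+

lemma transversal_max_lift: "transversal (max_lift \<rho>) j U mu S ms"
  unfolding transversal_def
proof (intro conjI ballI)
  fix s assume s: "s \<in> S"
  have range: "ms s (S.inv_of s) \<in> S.E" and max: "S.sigma_max s \<in> S"
    using s F_inverse by (simp_all add: S.mult_inv_of_idem S.sigma_max_closed)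
  then show "max_lift \<rho> s \<in> U"
    unfolding max_lift_def by (simp add: S.idems_closed transversal_closed)
  have "j (max_lift \<rho> s) = ms (ms s (S.inv_of s)) (S.sigma_max s)"
    unfolding max_lift_def using range max
    by (simp add: S.idems_closed hom_mult transversal_closed transversal_hom)
  also have "\<dots> = s"
    using s max F_inverse S.nat_le_iff S.nat_le_sigma_max by metis
  finally show "j (max_lift \<rho> s) = s" .
next
  fix e assume e: "e \<in> S.E"
  then show "max_lift \<rho> e \<in> U.E"
    unfolding max_lift_def
    using F_inverse by (simp add: S.idems_closed S.mult_inv_of_idem S.sigma_max_idem
        transversal_idem U.idems_mult_closed)
qed

lemma order_preserving_max_lift: "order_preserving_on (max_lift \<rho>) U mu S ms"
  unfolding order_preserving_on_def
proof (intro ballI impI)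
  fix s t assume s: "s \<in> S" and t: "t \<in> S" and st: "nat_le S ms s t"
  define e where "e = ms s (S.inv_of s)"
  have e: "e \<in> S.E" and et: "ms t (S.inv_of t) \<in> S.E"
    using s t unfolding e_def by (simp_all add: S.mult_inv_of_idem)
  have s_eq: "s = ms e t" using st t S.nat_le_iff unfolding e_def by blast
  then have "e = ms e (ms t (S.inv_of t))"
    using e t unfolding e_def by (metis S.idem_mult_range)
  then have "mu (\<rho> e) (\<rho> (ms t (S.inv_of t))) = \<rho> e"
    using e et transversal_idems_mult[OF \<rho>] by metis
  moreover have "S.sigma_max s = S.sigma_max t"
    using F_inverse st s t by (rule S.sigma_max_eq_if_nat_le)
  ultimately have "max_lift \<rho> s = mu (mu (\<rho> e) (\<rho> (ms t (S.inv_of t)))) (\<rho> (S.sigma_max t))"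
    unfolding max_lift_def e_def[symmetric] by simp
  also have "\<dots> = mu (\<rho> e) (max_lift \<rho> t)"
    unfolding max_lift_def using e et t F_inverse
    by (simp add: U.mult_assoc S.idems_closed S.sigma_max_closed transversal_closed)
  finally have "max_lift \<rho> s = mu (\<rho> e) (max_lift \<rho> t)" .
  then show "nat_le U mu (max_lift \<rho> s) (max_lift \<rho> t)"
    unfolding nat_le_def using e transversal_idem by blast
qed

end

theorem order_preserving_transversal_exists:
  assumes "F_inverse_monoid S ms"
  shows "\<exists>\<rho>. transversal \<rho> j U mu S ms \<and> order_preserving_on \<rho> U mu S ms"
  using assms transversal_exists transversal_max_lift order_preserving_max_lift by blast

end


theorem proposition3p26:
  fixes A :: "'a set" and ma :: "'a \<Rightarrow> 'a \<Rightarrow> 'a"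
    and U :: "'b set" and mu :: "'b \<Rightarrow> 'b \<Rightarrow> 'b"
    and S :: "'c set" and ms :: "'c \<Rightarrow> 'c \<Rightarrow> 'c"
    and i :: "'a \<Rightarrow> 'b" and j :: "'b \<Rightarrow> 'c"
  assumes "semilattice_of_groups A ma"
    and "is_extension A ma U mu S ms i j"
    and "F_inverse_monoid S ms"
  shows "\<exists>\<rho>. transversal \<rho> j U mu S ms \<and> order_preserving_on \<rho> U mu S ms"
proof -
  interpret idem_separating_epi U mu S ms j
    using assms(2) unfolding is_extension_def by unfold_locales auto
  show ?thesis using assms(3) by (rule order_preserving_transversal_exists)
qed

end
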